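(* Let $U=(U_{ij})_{i,j=1}^M$ with $U_{ij}\in M_M(\mathbb C)$ and $V=(V_{ab})_{a,b=1}^N$ with $V_{ab}\in M_N(\mathbb C)$ be projective models, and let $Q\in M_{M\times N}(\mathbb T)$ be arbitrary. Then the matrix $W=U\otimes_QV$, given by $$(W_{ia,jb})_{kc,ld}=\frac{Q_{ic}Q_{jd}}{Q_{id}Q_{jc}}(U_{ij})_{kl}(V_{ab})_{cd},$$ is a projective model, i.e. both $W$ and $W'$ are magic.
   Context: A square matrix with entries in a $C^*$-algebra is magic if its entries are orthogonal projections and each row and each column sums to $1$. For $U=(U_{ij})_{i,j=1}^n$ with $U_{ij}\in M_n(\mathbb C)$, $U'$ is defined by $(U'_{kl})_{ij}=(U_{ij})_{kl}$. $U$ is a projective model if $U$ and $U'$ are both magic. In the formula, $i,j,k,l\in\{1,\dots,M\}$, $a,b,c,d\in\{1,\dots,N\}$, and $W$ is the $MN\times MN$ matrix with entries $W_{ia,jb}\in M_{MN}(\mathbb C)$. *)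

theory Defs
  imports "HOL-Analysis.Analysis"
begin

text \<open>Square complex matrices indexed by a finite set K are represented as functions
  K \<Rightarrow> K \<Rightarrow> complex (values outside K are irrelevant).\<close>

definition mat_mult :: "'k set \<Rightarrow> ('k \<Rightarrow> 'k \<Rightarrow> complex) \<Rightarrow> ('k \<Rightarrow> 'k \<Rightarrow> complex) \<Rightarrow> ('k \<Rightarrow> 'k \<Rightarrow> complex)" where
  "mat_mult K A B = (\<lambda>k l. \<Sum>m\<in>K. A k m * B m l)"

definition mat_id :: "'k \<Rightarrow> 'k \<Rightarrow> complex" where
  "mat_id = (\<lambda>k l. if k = l then 1 else 0)"

definition is_proj :: "'k set \<Rightarrow> ('k \<Rightarrow> 'k \<Rightarrow> complex) \<Rightarrow> bool" where
  "is_proj K P \<longleftrightarrow>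
     (\<forall>k\<in>K. \<forall>l\<in>K. mat_mult K P P k l = P k l) \<and>
     (\<forall>k\<in>K. \<forall>l\<in>K. cnj (P l k) = P k l)"

definition magic :: "'i set \<Rightarrow> 'k set \<Rightarrow> ('i \<Rightarrow> 'i \<Rightarrow> 'k \<Rightarrow> 'k \<Rightarrow> complex) \<Rightarrow> bool" where
  "magic I K U \<longleftrightarrow>
     (\<forall>i\<in>I. \<forall>j\<in>I. is_proj K (U i j)) \<and>
     (\<forall>i\<in>I. \<forall>k\<in>K. \<forall>l\<in>K. (\<Sum>j\<in>I. U i j k l) = mat_id k l) \<and>
     (\<forall>j\<in>I. \<forall>k\<in>K. \<forall>l\<in>K. (\<Sum>i\<in>I. U i j k l) = mat_id k l)"

definition prime_swap :: "('i \<Rightarrow> 'i \<Rightarrow> 'i \<Rightarrow> 'i \<Rightarrow> complex) \<Rightarrow> ('i \<Rightarrow> 'i \<Rightarrow> 'i \<Rightarrow> 'i \<Rightarrow> complex)" where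
  "prime_swap U = (\<lambda>k l i j. U i j k l)"

definition projective_model :: "'i set \<Rightarrow> ('i \<Rightarrow> 'i \<Rightarrow> 'i \<Rightarrow> 'i \<Rightarrow> complex) \<Rightarrow> bool" where
  "projective_model I U \<longleftrightarrow> magic I I U \<and> magic I I (prime_swap U)"

definition twisted_tensor ::
  "('i \<Rightarrow> 'a \<Rightarrow> complex) \<Rightarrow> ('i \<Rightarrow> 'i \<Rightarrow> 'i \<Rightarrow> 'i \<Rightarrow> complex) \<Rightarrow> ('a \<Rightarrow> 'a \<Rightarrow> 'a \<Rightarrow> 'a \<Rightarrow> complex)
   \<Rightarrow> ('i \<times> 'a \<Rightarrow> 'i \<times> 'a \<Rightarrow> 'i \<times> 'a \<Rightarrow> 'i \<times> 'a \<Rightarrow> complex)" where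
  "twisted_tensor Q U V = (\<lambda>(i,a) (j,b) (k,c) (l,d).
      Q i c * Q j d / (Q i d * Q j c) * U i j k l * V a b c d)"

end

theory Submission
  imports Defs
begin

text \<open>Each entry of W is the tensor product of an entry of U and an entry of V, conjugated by
  a diagonal unitary: with u(c) = Q_ic / Q_jc the twist is u(c) / u(d).  Each entry of W' is
  likewise the tensor product of entries of U' and V', conjugated by the diagonal unitary
  v(i) = Q_ic / Q_id.  Tensor products and unitary conjugates of projections are projections.
  For the row and column sums, summing out one tensor factor leaves a Kronecker delta that forces
  the twist to be 1.\<close>

lemma unimodular_mult_cnj: "cmod z = 1 \<Longrightarrow> z * cnj z = 1"
  using complex_norm_square[of z] by simp

lemma mat_id_pair: "mat_id (k, c) (l, d) = mat_id k l * mat_id c d"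
  by (simp add: mat_id_def)

lemma is_proj_tensor:
  assumes P: "is_proj K P" and R: "is_proj L R"
  shows "is_proj (K \<times> L) (\<lambda>(k, c) (l, d). P k l * R c d)"
proof -
  have "mat_mult (K \<times> L) (\<lambda>(k, c) (l, d). P k l * R c d) (\<lambda>(k, c) (l, d). P k l * R c d) (k, c) (l, d)
      = P k l * R c d" if "k \<in> K" "l \<in> K" "c \<in> L" "d \<in> L" for k l c d
  proof -
    have "mat_mult (K \<times> L) (\<lambda>(k, c) (l, d). P k l * R c d) (\<lambda>(k, c) (l, d). P k l * R c d) (k, c) (l, d)
        = (\<Sum>m\<in>K. \<Sum>e\<in>L. (P k m * P m l) * (R c e * R e d))"
      by (simp add: mat_mult_def sum.cartesian_product' mult_ac)
    also have "\<dots> = mat_mult K P P k l * mat_mult L R R c d"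
      by (simp add: mat_mult_def sum_product)
    also have "\<dots> = P k l * R c d"
      using P R that by (simp add: is_proj_def)
    finally show ?thesis .
  qed
  then show ?thesis
    using P R by (auto simp: is_proj_def)
qed

lemma is_proj_diag_unitary_conj:
  assumes P: "is_proj K P" and u: "\<forall>k\<in>K. cmod (u k) = 1"
    and R: "\<forall>k\<in>K. \<forall>l\<in>K. R k l = u k * P k l * cnj (u l)"
  shows "is_proj K R"
proof -
  have "mat_mult K R R k l = R k l" if "k \<in> K" "l \<in> K" for k l
  proof -
    have "mat_mult K R R k l = (\<Sum>m\<in>K. u k * (P k m * P m l) * cnj (u l) * (u m * cnj (u m)))"
      using R that by (auto simp: mat_mult_def mult_ac intro!: sum.cong)
    also have "\<dots> = u k * mat_mult K P P k l * cnj (u l)"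
      using u by (simp add: unimodular_mult_cnj mat_mult_def sum_distrib_left sum_distrib_right)
    finally show ?thesis
      using P R that by (simp add: is_proj_def)
  qed
  moreover have "cnj (R l k) = R k l" if "k \<in> K" "l \<in> K" for k l
    using P R that by (simp add: is_proj_def mult_ac)
  ultimately show ?thesis
    by (simp add: is_proj_def)
qed

lemma sum_product_delta_left:
  assumes "sum g B = mat_id p q" and "p = q \<Longrightarrow> \<forall>x\<in>A. \<phi> x = 1"
  shows "(\<Sum>(x, y)\<in>A \<times> B. \<phi> x * f x * g y) = sum f A * mat_id p q"
proof -
  have "(\<Sum>(x, y)\<in>A \<times> B. \<phi> x * f x * g y) = (\<Sum>x\<in>A. \<phi> x * f x * mat_id p q)"
    using assms(1) by (simp add: sum.cartesian_product' flip: sum_distrib_left)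
  also have "\<dots> = sum f A * mat_id p q"
    using assms(2) by (cases "p = q") (simp_all add: mat_id_def sum_distrib_right)
  finally show ?thesis .
qed

lemma sum_product_delta_right:
  assumes "sum f A = mat_id p q" and "p = q \<Longrightarrow> \<forall>y\<in>B. \<phi> y = 1"
  shows "(\<Sum>(x, y)\<in>A \<times> B. \<phi> y * f x * g y) = mat_id p q * sum g B"
proof -
  have "(\<Sum>(x, y)\<in>A \<times> B. \<phi> y * f x * g y) = (\<Sum>(y, x)\<in>B \<times> A. \<phi> y * g y * f x)"
    unfolding sum.cartesian_product' by (subst sum.swap) (auto intro!: sum.cong simp: mult_ac)
  also have "\<dots> = sum g B * mat_id p q"
    by (rule sum_product_delta_left) (use assms in auto)
  finally show ?thesis
    by (simp add: mult.commute)
qed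

context
  fixes Q :: "'i \<Rightarrow> 'a \<Rightarrow> complex" and I :: "'i set" and J :: "'a set"
  assumes unimodular: "\<forall>i\<in>I. \<forall>c\<in>J. cmod (Q i c) = 1"
begin

lemma twisted_tensor_apply:
  assumes "i \<in> I" "j \<in> I" "c \<in> J" "d \<in> J"
  shows "twisted_tensor Q U V (i, a) (j, b) (k, c) (l, d)
    = Q i c * cnj (Q j c) * cnj (Q i d) * Q j d * U i j k l * V a b c d"
proof -
  have "Q i c * Q j d / (Q i d * Q j c) = Q i c * Q j d * cnj (Q i d * Q j c)"
    using unimodular assms by (simp add: divide_conv_cnj norm_mult)
  then show ?thesis
    by (simp only: twisted_tensor_def case_prod_conv) (simp add: mult_ac)
qed

lemma twist_same_column:
  assumes "i \<in> I" "j \<in> I" "c \<in> J"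
  shows "Q i c * cnj (Q j c) * cnj (Q i c) * Q j c = 1"
proof -
  have "Q i c * cnj (Q j c) * cnj (Q i c) * Q j c = (Q i c * cnj (Q i c)) * (Q j c * cnj (Q j c))"
    by (simp only: mult_ac)
  then show ?thesis
    using unimodular assms by (simp add: unimodular_mult_cnj)
qed

lemma twist_same_row:
  assumes "i \<in> I" "c \<in> J" "d \<in> J"
  shows "Q i c * cnj (Q i c) * cnj (Q i d) * Q i d = 1"
proof -
  have "Q i c * cnj (Q i c) * cnj (Q i d) * Q i d = (Q i c * cnj (Q i c)) * (Q i d * cnj (Q i d))"
    by (simp only: mult_ac)
  then show ?thesis
    using unimodular assms by (simp add: unimodular_mult_cnj)
qed

lemma magic_twisted_tensor:
  assumes U: "magic I I U" and V: "magic J J V"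
  shows "magic (I \<times> J) (I \<times> J) (twisted_tensor Q U V)"
proof -
  have proj: "is_proj (I \<times> J) (twisted_tensor Q U V (i, a) (j, b))"
    if "i \<in> I" "j \<in> I" "a \<in> J" "b \<in> J" for i j a b
  proof (rule is_proj_diag_unitary_conj)
    show "is_proj (I \<times> J) (\<lambda>(k, c) (l, d). U i j k l * V a b c d)"
      using U V that by (intro is_proj_tensor) (auto simp: magic_def)
    show "\<forall>x\<in>I \<times> J. cmod ((\<lambda>(k, c). Q i c * cnj (Q j c)) x) = 1"
      using unimodular that by (auto simp: norm_mult)
  qed (use that in \<open>auto simp: twisted_tensor_apply mult_ac\<close>)
  have row: "(\<Sum>y\<in>I \<times> J. twisted_tensor Q U V (i, a) y (k, c) (l, d)) = mat_id (k, c) (l, d)"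
    if "i \<in> I" "a \<in> J" "k \<in> I" "l \<in> I" "c \<in> J" "d \<in> J" for i a k l c d
  proof -
    have "(\<Sum>y\<in>I \<times> J. twisted_tensor Q U V (i, a) y (k, c) (l, d))
        = (\<Sum>(j, b)\<in>I \<times> J. (Q i c * cnj (Q j c) * cnj (Q i d) * Q j d) * U i j k l * V a b c d)"
      using that by (intro sum.cong) (auto simp: twisted_tensor_apply)
    also have "\<dots> = (\<Sum>j\<in>I. U i j k l) * mat_id c d"
      using V that by (intro sum_product_delta_left) (simp_all add: magic_def twist_same_column)
    finally show ?thesis
      using U that by (simp add: magic_def mat_id_pair)
  qed
  have col: "(\<Sum>x\<in>I \<times> J. twisted_tensor Q U V x (j, b) (k, c) (l, d)) = mat_id (k, c) (l, d)"
    if "j \<in> I" "b \<in> J" "k \<in> I" "l \<in> I" "c \<in> J" "d \<in> J" for j b k l c d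
  proof -
    have "(\<Sum>x\<in>I \<times> J. twisted_tensor Q U V x (j, b) (k, c) (l, d))
        = (\<Sum>(i, a)\<in>I \<times> J. (Q i c * cnj (Q j c) * cnj (Q i d) * Q j d) * U i j k l * V a b c d)"
      using that by (intro sum.cong) (auto simp: twisted_tensor_apply)
    also have "\<dots> = (\<Sum>i\<in>I. U i j k l) * mat_id c d"
      using V that by (intro sum_product_delta_left) (simp_all add: magic_def twist_same_column)
    finally show ?thesis
      using U that by (simp add: magic_def mat_id_pair)
  qed
  show ?thesis
    by (simp add: magic_def proj row col)
qed

lemma magic_prime_swap_twisted_tensor:
  assumes U: "magic I I (prime_swap U)" and V: "magic J J (prime_swap V)"
  shows "magic (I \<times> J) (I \<times> J) (prime_swap (twisted_tensor Q U V))"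
proof -
  have proj: "is_proj (I \<times> J) (prime_swap (twisted_tensor Q U V) (k, c) (l, d))"
    if "k \<in> I" "l \<in> I" "c \<in> J" "d \<in> J" for k l c d
  proof (rule is_proj_diag_unitary_conj)
    show "is_proj (I \<times> J) (\<lambda>(i, a) (j, b). prime_swap U k l i j * prime_swap V c d a b)"
      using U V that by (intro is_proj_tensor) (auto simp: magic_def)
    show "\<forall>x\<in>I \<times> J. cmod ((\<lambda>(i, a). Q i c * cnj (Q i d)) x) = 1"
      using unimodular that by (auto simp: norm_mult)
  qed (use that in \<open>auto simp: prime_swap_def twisted_tensor_apply mult_ac\<close>)
  have row: "(\<Sum>y\<in>I \<times> J. prime_swap (twisted_tensor Q U V) (k, c) y (i, a) (j, b)) = mat_id (i, a) (j, b)"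
    if "k \<in> I" "c \<in> J" "i \<in> I" "j \<in> I" "a \<in> J" "b \<in> J" for k c i j a b
  proof -
    have "(\<Sum>y\<in>I \<times> J. prime_swap (twisted_tensor Q U V) (k, c) y (i, a) (j, b))
        = (\<Sum>(l, d)\<in>I \<times> J. (Q i c * cnj (Q j c) * cnj (Q i d) * Q j d) * U i j k l * V a b c d)"
      using that by (intro sum.cong) (auto simp: prime_swap_def twisted_tensor_apply)
    also have "\<dots> = mat_id i j * (\<Sum>d\<in>J. V a b c d)"
      using U that by (intro sum_product_delta_right) (simp_all add: magic_def prime_swap_def twist_same_row)
    finally show ?thesis
      using V that by (simp add: magic_def prime_swap_def mat_id_pair mult.commute)
  qed
  have col: "(\<Sum>x\<in>I \<times> J. prime_swap (twisted_tensor Q U V) x (l, d) (i, a) (j, b)) = mat_id (i, a) (j, b)"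
    if "l \<in> I" "d \<in> J" "i \<in> I" "j \<in> I" "a \<in> J" "b \<in> J" for l d i j a b
  proof -
    have "(\<Sum>x\<in>I \<times> J. prime_swap (twisted_tensor Q U V) x (l, d) (i, a) (j, b))
        = (\<Sum>(k, c)\<in>I \<times> J. (Q i c * cnj (Q j c) * cnj (Q i d) * Q j d) * U i j k l * V a b c d)"
      using that by (intro sum.cong) (auto simp: prime_swap_def twisted_tensor_apply)
    also have "\<dots> = mat_id i j * (\<Sum>c\<in>J. V a b c d)"
      using U that by (intro sum_product_delta_right) (simp_all add: magic_def prime_swap_def twist_same_row)
    finally show ?thesis
      using V that by (simp add: magic_def prime_swap_def mat_id_pair mult.commute)
  qed
  show ?thesis
    by (simp add: magic_def proj row col)
qed

end

theorem proposition2p4: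
  fixes M N :: nat
    and U :: "nat \<Rightarrow> nat \<Rightarrow> nat \<Rightarrow> nat \<Rightarrow> complex"
    and V :: "nat \<Rightarrow> nat \<Rightarrow> nat \<Rightarrow> nat \<Rightarrow> complex"
    and Q :: "nat \<Rightarrow> nat \<Rightarrow> complex"
  assumes "projective_model {1..M} U"
    and "projective_model {1..N} V"
    and "\<forall>i\<in>{1..M}. \<forall>c\<in>{1..N}. cmod (Q i c) = 1"
  shows "projective_model ({1..M} \<times> {1..N}) (twisted_tensor Q U V)"
  using assms magic_twisted_tensor [OF assms(3)] magic_prime_swap_twisted_tensor [OF assms(3)]
  by (simp add: projective_model_def)

end
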